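(* Let $N_1$ be a lattice, $M_1=\mathrm{Hom}(N_1,\mathbb Z)$, and let $(\sigma,\sigma^0)$ be a stacky fan in $N_{1,\mathbb R}$ whose fan consists of a simplicial cone $\sigma$ with $\dim\sigma=\mathrm{rk}N_1$ and its faces. Then the $(\sigma,\sigma^0)$-free resolution of $\sigma^\vee\cap M_1$ is given by the natural inclusion $$\sigma^\vee\cap M_1\to\{m\in M_1\otimes_{\mathbb Z}\mathbb Q:\langle m,n\rangle\in\mathbb Z_{\ge0}\text{ for all }n\in\sigma^0\}.$$
   Context: A stacky fan $(\Sigma,\Sigma^0)$ in $N_{\mathbb R}$: $\Sigma$ a finite simplicial fan, $\Sigma^0\subset|\Sigma|\cap N$ such that for each cone $\tau$, $\tau\cap\Sigma^0$ is a submonoid of $\tau\cap N$ isomorphic to $\mathbb N^{\dim\tau}$ and every element of $\tau\cap N$ has a positive multiple in it. For a ray $\rho$ with first nonzero lattice point $\zeta_\rho$, the level $n_\rho$ is the integer with $n_\rho\zeta_\rho$ the first nonzero point of $\rho\cap\Sigma^0$. A submonoid $S\subset P$ is close to $P$ if every element of $P$ has a positive multiple in $S$. For $P=\sigma^\vee\cap M_1$ (sharp, simplicially toric, of rank $d$), the minimal free resolution is the injective homomorphism $r:P\to F\cong\mathbb N^d$ with $r(P)$ close to $F$ such that every injective $j:P\to G\cong\mathbb N^d$ with close image factors uniquely as $j=\phi\circ r$. Each irreducible element $e$ of $F$ corresponds to the unique ray $\rho$ of $\sigma$ such that $\langle m,\zeta_\rho\rangle>0$ for $m\in P$ with $r(m)$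 a positive multiple of $e$; write $e_\rho$. The $(\sigma,\sigma^0)$-free resolution of $P$ is $t\circ r:P\to F$, where $t:F\to F$, $e_\rho\mapsto n_\rho e_\rho$. The claim means the displayed target is a free monoid of rank $d$ and the inclusion is isomorphic (under $P$) to $t\circ r$. *)

theory Defs
  imports "HOL-Analysis.Analysis"
begin

text \<open>The lattice N_1 is modelled as the integer points of real^'n (rank = CARD('n));
  M_1 = Hom(N_1,Z) is identified with the same integer points via the dot product,
  and M_1 (x) Q with the vectors having rational coordinates.\<close>

definition lat :: "(real^'n) set" where
  "lat = {x. \<forall>i. x $ i \<in> \<int>}"

text \<open>Cone generated by the vectors u i, i in S.  The simplicial cone sigma is
  cone_gen u UNIV; its faces are exactly the cone_gen u S.\<close>
definition cone_gen :: "('n \<Rightarrow> real^'n) \<Rightarrow> 'n set \<Rightarrow> (real^'n) set" where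
  "cone_gen u S = {(\<Sum>i\<in>S. c i *\<^sub>R u i) | c. \<forall>i\<in>S. c i \<ge> 0}"

definition ray :: "('n \<Rightarrow> real^'n) \<Rightarrow> 'n \<Rightarrow> (real^'n) set" where
  "ray u i = cone_gen u {i}"

definition free_monoid_rank :: "(real^'n) set \<Rightarrow> nat \<Rightarrow> bool" where
  "free_monoid_rank A k \<longleftrightarrow> (\<exists>f :: nat \<Rightarrow> real^'n.
      A = {(\<Sum>i<k. real (c i) *\<^sub>R f i) | c. True} \<and>
      (\<forall>c c'. (\<Sum>i<k. real (c i) *\<^sub>R f i) = (\<Sum>i<k. real (c' i) *\<^sub>R f i)
               \<longrightarrow> (\<forall>i<k. c i = c' i)))"

text \<open>(sigma, sigma^0) is a stacky fan whose fan is sigma and its faces.\<close>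
definition stacky_simplex :: "('n \<Rightarrow> real^'n) \<Rightarrow> (real^'n) set \<Rightarrow> bool" where
  "stacky_simplex u S0 \<longleftrightarrow>
     S0 \<subseteq> cone_gen u UNIV \<inter> lat \<and>
     (\<forall>S. free_monoid_rank (cone_gen u S \<inter> S0) (card S) \<and>
          (\<forall>x\<in>cone_gen u S \<inter> lat. \<exists>k::nat. k > 0 \<and> real k *\<^sub>R x \<in> cone_gen u S \<inter> S0))"

definition prim_ray :: "('n \<Rightarrow> real^'n) \<Rightarrow> 'n \<Rightarrow> real^'n" where
  "prim_ray u i = (THE z. z \<in> lat \<inter> ray u i \<and> z \<noteq> 0 \<and>
      (\<forall>w \<in> lat \<inter> ray u i. w \<noteq> 0 \<longrightarrow> norm z \<le> norm w))"

definition level :: "('n \<Rightarrow> real^'n) \<Rightarrow> (real^'n) set \<Rightarrow> 'n \<Rightarrow> nat" where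
  "level u S0 i = (LEAST k::nat. k > 0 \<and> real k *\<^sub>R prim_ray u i \<in> S0)"

definition dual_monoid :: "('n \<Rightarrow> real^'n) \<Rightarrow> (real^'n) set" where
  "dual_monoid u = {m \<in> lat. \<forall>v \<in> cone_gen u UNIV. m \<bullet> v \<ge> 0}"

text \<open>Free monoids of rank d are modelled by N^d = ('n \<Rightarrow> nat).\<close>
definition mon_hom_on :: "(real^'n) set \<Rightarrow> (real^'n \<Rightarrow> ('n \<Rightarrow> nat)) \<Rightarrow> bool" where
  "mon_hom_on P r \<longleftrightarrow> r 0 = (\<lambda>_. 0) \<and>
     (\<forall>a\<in>P. \<forall>b\<in>P. r (a + b) = (\<lambda>i. r a i + r b i))"

definition nat_hom :: "(('n \<Rightarrow> nat) \<Rightarrow> ('n \<Rightarrow> nat)) \<Rightarrow> bool" where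
  "nat_hom \<phi> \<longleftrightarrow> \<phi> (\<lambda>_. 0) = (\<lambda>_. 0) \<and>
     (\<forall>x y. \<phi> (\<lambda>i. x i + y i) = (\<lambda>i. \<phi> x i + \<phi> y i))"

definition close_image :: "(real^'n) set \<Rightarrow> (real^'n \<Rightarrow> ('n \<Rightarrow> nat)) \<Rightarrow> bool" where
  "close_image P r \<longleftrightarrow> (\<forall>x. \<exists>k::nat. k > 0 \<and> (\<exists>m\<in>P. r m = (\<lambda>i. k * x i)))"

definition minimal_free_resolution :: "(real^'n) set \<Rightarrow> (real^'n \<Rightarrow> ('n \<Rightarrow> nat)) \<Rightarrow> bool" where
  "minimal_free_resolution P r \<longleftrightarrow>
     mon_hom_on P r \<and> inj_on r P \<and> close_image P r \<and>
     (\<forall>j. mon_hom_on P j \<and> inj_on j P \<and> close_image P j \<longrightarrow>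
        (\<exists>!\<phi>. nat_hom \<phi> \<and> (\<forall>m\<in>P. j m = \<phi> (r m))))"

definition unitv :: "'n \<Rightarrow> ('n \<Rightarrow> nat)" where
  "unitv i = (\<lambda>j. if j = i then 1 else 0)"

text \<open>The ray rho (index) corresponding to the irreducible element e_i.\<close>
definition assoc_ray :: "('n \<Rightarrow> real^'n) \<Rightarrow> (real^'n \<Rightarrow> ('n \<Rightarrow> nat)) \<Rightarrow> 'n \<Rightarrow> 'n" where
  "assoc_ray u r i = (THE \<rho>. \<forall>m \<in> dual_monoid u. \<forall>k::nat. k > 0 \<longrightarrow>
       r m = (\<lambda>j. k * unitv i j) \<longrightarrow> m \<bullet> prim_ray u \<rho> > 0)"

definition stacky_resolution ::
  "('n \<Rightarrow> real^'n) \<Rightarrow> (real^'n) set \<Rightarrow> (real^'n \<Rightarrow> ('n \<Rightarrow> nat)) \<Rightarrow> real^'n \<Rightarrow> ('n \<Rightarrow> nat)" where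
  "stacky_resolution u S0 r m = (\<lambda>i. level u S0 (assoc_ray u r i) * r m i)"

definition target :: "(real^'n) set \<Rightarrow> (real^'n) set" where
  "target S0 = {m. (\<forall>i. m $ i \<in> \<rat>) \<and> (\<forall>v\<in>S0. m \<bullet> v \<in> \<nat>)}"

end

theory Submission
  imports Defs
begin

text \<open>
  Write g_rho = n_rho zeta_rho for the first nonzero point of rho \<inter> sigma^0. These points
  form a basis of the ambient space, sigma^0 is the free monoid on them, and
  P = sigma^dual \<inter> M_1 consists of the lattice points m with m \<bullet> g_rho \<ge> 0 for all rho.
  A suitable multiple of every element of P is a natural combination of the (scaled) dual
  basis vectors of the g_rho, which lie in P; hence the minimal free resolution r is
  determined by its values on them. Closeness of the image forces each of these values to
  be supported on a single coordinate, so r m = (beta_i (m \<bullet> g_sigma(i)))_i for a bijection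
  sigma and scalars beta. Comparing r, via its universal property, with the
  resolution m \<mapsto> (m \<bullet> zeta_rho)_rho, and using an m \<in> P with m \<bullet> zeta_rho = 1, gives
  r m = (m \<bullet> zeta_sigma(i))_i. Thus the (sigma, sigma^0)-free resolution is
  m \<mapsto> (m \<bullet> g_sigma(i))_i, which is inverted on P by the isomorphism
  x \<mapsto> \<Sum> x_i g^*_sigma(i) of N^d onto the target monoid, g^* the dual basis.
\<close>

section \<open>Lattice points\<close>

lemma zero_in_lat [simp]: "0 \<in> lat"
  by (simp add: lat_def)

lemma lat_add: "x \<in> lat \<Longrightarrow> y \<in> lat \<Longrightarrow> x + y \<in> lat"
  by (simp add: lat_def)

lemma lat_scaleR: "x \<in> lat \<Longrightarrow> k \<in> \<int> \<Longrightarrow> k *\<^sub>R x \<in> lat"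
  by (simp add: lat_def)

lemma lat_sum: "(\<And>i. i \<in> F \<Longrightarrow> f i \<in> lat) \<Longrightarrow> sum f F \<in> lat"
  by (induction F rule: infinite_finite_induct) (auto simp: lat_add)

lemma lat_inner: "x \<in> lat \<Longrightarrow> y \<in> lat \<Longrightarrow> x \<bullet> y \<in> \<int>"
  by (auto simp: lat_def inner_vec_def)

lemma Gcd_eq_linear_combination:
  fixes a :: "'i \<Rightarrow> int"
  assumes "finite F"
  shows "\<exists>c. (\<Sum>j\<in>F. c j * a j) = Gcd (a ` F)"
  using assms
proof (induction F rule: finite_induct)
  case (insert x F)
  obtain c where c: "(\<Sum>j\<in>F. c j * a j) = Gcd (a ` F)"
    using insert.IH by blast
  obtain s t where st: "s * a x + t * Gcd (a ` F) = gcd (a x) (Gcd (a ` F))"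
    using bezout_int by blast
  have "(\<Sum>j\<in>F. (if j = x then s else t * c j) * a j) = t * (\<Sum>j\<in>F. c j * a j)"
    using insert.hyps(2) by (auto simp: sum_distrib_left mult.assoc intro!: sum.cong)
  then show ?case
    using insert.hyps st c by (intro exI[of _ "\<lambda>j. if j = x then s else t * c j"]) simp
qed simp

text \<open>The generator is h / g, g the gcd of the coordinates of h; a Bezout combination of
  these coordinates is a lattice point pairing to 1 with it.\<close>

lemma lat_halfline_generator:
  assumes h: "h \<in> lat" "h \<noteq> 0"
  obtains z where "lat \<inter> {t *\<^sub>R h | t. t \<ge> 0} = {real n *\<^sub>R z | n. True}"
    and "\<exists>m\<in>lat. m \<bullet> z = 1"
proof -
  define a where "a j = \<lfloor>h $ j\<rfloor>" for j
  have h_a: "h $ j = of_int (a j)" for j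
    using h(1) by (auto simp: lat_def a_def elim!: Ints_cases)
  define g where "g = Gcd (range a)"
  obtain c where c: "(\<Sum>j\<in>UNIV. c j * a j) = g"
    using Gcd_eq_linear_combination[of UNIV a] by (auto simp: g_def)
  have "\<not> range a \<subseteq> {0}"
    using h by (auto simp: h_a vec_eq_iff)
  then have g_pos: "g > 0"
    unfolding g_def using Gcd_int_greater_eq_0[of "range a"] by (simp add: order_less_le)
  have g_dvd: "g dvd a j" for j
    unfolding g_def by (rule Gcd_dvd) simp
  define m :: "real^'a" where "m = (\<chi> j. of_int (c j))"
  have m_lat: "m \<in> lat"
    by (simp add: m_def lat_def)
  have m_inner: "m \<bullet> x = of_int g * t" if "x = t *\<^sub>R h" for x t
  proof -
    have "m \<bullet> h = of_int g"
      by (simp add: m_def inner_vec_def h_a flip: c)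
    then show ?thesis
      using that by simp
  qed
  define z where "z = (1 / of_int g) *\<^sub>R h"
  show thesis
  proof
    show "\<exists>m\<in>lat. m \<bullet> z = 1"
      using m_lat m_inner[of z "1 / of_int g"] g_pos by (auto simp: z_def)
    show "lat \<inter> {t *\<^sub>R h | t. t \<ge> 0} = {real n *\<^sub>R z | n. True}"
    proof (intro set_eqI iffI)
      fix x assume "x \<in> lat \<inter> {t *\<^sub>R h | t. t \<ge> 0}"
      then obtain t where t: "x \<in> lat" "t \<ge> 0" "x = t *\<^sub>R h"
        by blast
      have "of_int g * t \<in> \<nat>"
        using lat_inner[OF m_lat t(1)] m_inner[OF t(3)] g_pos t(2) by (simp add: Nats_altdef2)
      then obtain n where "of_int g * t = real n"
        by (auto elim: Nats_cases)
      then have "t = real n / of_int g"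
        using g_pos by (simp add: field_simps)
      then have "x = real n *\<^sub>R z"
        using t(3) by (simp add: z_def)
      then show "x \<in> {real n *\<^sub>R z | n. True}"
        by blast
    next
      fix x assume "x \<in> {real n *\<^sub>R z | n. True}"
      then obtain n where x: "x = (real n / of_int g) *\<^sub>R h"
        by (auto simp: z_def)
      have "x $ j \<in> \<int>" for j
      proof -
        obtain e where "a j = g * e"
          using g_dvd[of j] by (elim dvdE)
        then have "x $ j = of_int (int n * e)"
          using g_pos by (simp add: x h_a)
        then show ?thesis
          by simp
      qed
      then show "x \<in> lat \<inter> {t *\<^sub>R h | t. t \<ge> 0}"
        using g_pos x by (auto simp: lat_def)
    qed
  qed
qed

lemma self_in_nat_multiples: "(x :: 'a::real_vector) \<in> {real n *\<^sub>R x | n. True}"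
  by (intro CollectI exI[of _ "1::nat"]) simp

lemma sum_delta_scaleR:
  fixes f :: "'i::finite \<Rightarrow> 'a::real_vector"
  shows "(\<Sum>j\<in>UNIV. (if j = i then t else 0) *\<^sub>R f j) = t *\<^sub>R f i"
proof -
  have "(\<Sum>j\<in>UNIV. (if j = i then t else 0) *\<^sub>R f j) = (\<Sum>j\<in>UNIV. if j = i then t *\<^sub>R f j else 0)"
    by (rule sum.cong) auto
  then show ?thesis
    by simp
qed

lemma halfline_scaleR_pos:
  fixes v :: "'a::real_vector"
  assumes "t > 0"
  shows "{s *\<^sub>R (t *\<^sub>R v) | s. s \<ge> 0} = {s *\<^sub>R v | s. s \<ge> 0}"
proof (intro set_eqI iffI)
  fix x assume "x \<in> {s *\<^sub>R (t *\<^sub>R v) | s. s \<ge> 0}"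
  then obtain s where "s \<ge> 0" "x = s *\<^sub>R (t *\<^sub>R v)"
    by blast
  with assms show "x \<in> {s *\<^sub>R v | s. s \<ge> 0}"
    by (intro CollectI exI[of _ "s * t"]) simp
next
  fix x assume "x \<in> {s *\<^sub>R v | s. s \<ge> 0}"
  then obtain s where "s \<ge> 0" "x = s *\<^sub>R v"
    by blast
  with assms show "x \<in> {s *\<^sub>R (t *\<^sub>R v) | s. s \<ge> 0}"
    by (intro CollectI exI[of _ "s / t"]) simp
qed

lemma ray_eq: "ray u i = {t *\<^sub>R u i | t. t \<ge> 0}"
  unfolding ray_def cone_gen_def by auto

lemma prim_ray_eqI:
  assumes lat_ray: "lat \<inter> ray u i = {real n *\<^sub>R z | n. True}" and "z \<noteq> 0"
  shows "prim_ray u i = z"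
  unfolding prim_ray_def
proof (rule the_equality)
  have z: "z \<in> lat \<inter> ray u i"
    unfolding lat_ray by (rule self_in_nat_multiples)
  show "z \<in> lat \<inter> ray u i \<and> z \<noteq> 0 \<and> (\<forall>w\<in>lat \<inter> ray u i. w \<noteq> 0 \<longrightarrow> norm z \<le> norm w)"
  proof (intro conjI ballI impI z \<open>z \<noteq> 0\<close>)
    fix w assume "w \<in> lat \<inter> ray u i" "w \<noteq> 0"
    then obtain n where "w = real n *\<^sub>R z" "n \<ge> 1"
      unfolding lat_ray by (auto simp: Suc_le_eq)
    then show "norm z \<le> norm w"
      by (simp add: mult_le_cancel_right1)
  qed
  fix y assume y: "y \<in> lat \<inter> ray u i \<and> y \<noteq> 0 \<and> (\<forall>w\<in>lat \<inter> ray u i. w \<noteq> 0 \<longrightarrow> norm y \<le> norm w)"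
  then obtain n where n: "y = real n *\<^sub>R z" "n \<noteq> 0"
    unfolding lat_ray by auto
  have "real n * norm z \<le> 1 * norm z"
    using y z \<open>z \<noteq> 0\<close> n(1) by auto
  then have "n = 1"
    using n(2) \<open>z \<noteq> 0\<close> by (simp add: mult_le_cancel_right)
  with n show "y = z"
    by simp
qed

section \<open>Free commutative monoids\<close>

lemma nat_scaleR_mem:
  fixes A :: "'a::real_vector set"
  assumes "0 \<in> A" and "\<And>x y. x \<in> A \<Longrightarrow> y \<in> A \<Longrightarrow> x + y \<in> A" and "a \<in> A"
  shows "real n *\<^sub>R a \<in> A"
  using assms by (induction n) (auto simp: algebra_simps)

lemma nat_combination_mem:
  fixes A :: "'a::real_vector set"
  assumes "0 \<in> A" and "\<And>x y. x \<in> A \<Longrightarrow> y \<in> A \<Longrightarrow> x + y \<in> A" and "\<And>i. i \<in> F \<Longrightarrow> g i \<in> A"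
  shows "(\<Sum>i\<in>F. real (c i) *\<^sub>R g i) \<in> A"
  using assms(3) by (induction F rule: infinite_finite_induct) (auto intro: assms(1,2) nat_scaleR_mem)

lemma mon_hom_on_zero: "mon_hom_on P h \<Longrightarrow> h 0 = (\<lambda>_. 0)"
  and mon_hom_on_add: "mon_hom_on P h \<Longrightarrow> a \<in> P \<Longrightarrow> b \<in> P \<Longrightarrow> h (a + b) = (\<lambda>i. h a i + h b i)"
  unfolding mon_hom_on_def by blast+

lemma mon_hom_on_nat_scaleR:
  assumes hom: "mon_hom_on P h" and "0 \<in> P" and "\<And>x y. x \<in> P \<Longrightarrow> y \<in> P \<Longrightarrow> x + y \<in> P"
    and "x \<in> P"
  shows "h (real n *\<^sub>R x) = (\<lambda>i. n * h x i)"
proof (induction n)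
  case 0
  then show ?case
    using mon_hom_on_zero[OF hom] by simp
next
  case (Suc n)
  have "h (real (Suc n) *\<^sub>R x) = h (x + real n *\<^sub>R x)"
    by (simp add: algebra_simps)
  also have "\<dots> = (\<lambda>i. h x i + h (real n *\<^sub>R x) i)"
    using mon_hom_on_add[OF hom] nat_scaleR_mem[of P x n] assms(2-4) by blast
  finally show ?case
    using Suc by simp
qed

lemma mon_hom_on_nat_combination:
  assumes hom: "mon_hom_on P h" and "0 \<in> P" and "\<And>x y. x \<in> P \<Longrightarrow> y \<in> P \<Longrightarrow> x + y \<in> P"
    and p: "\<And>j. p j \<in> P"
  shows "h (\<Sum>j\<in>F. real (c j) *\<^sub>R p j) = (\<lambda>i. \<Sum>j\<in>F. c j * h (p j) i)"
proof (induction F rule: infinite_finite_induct)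
  case (insert j F)
  have "real (c j) *\<^sub>R p j \<in> P" "(\<Sum>j\<in>F. real (c j) *\<^sub>R p j) \<in> P"
    using assms(2,3) p by (metis nat_scaleR_mem, metis nat_combination_mem)
  then show ?case
    using insert mon_hom_on_add[OF hom] mon_hom_on_nat_scaleR[OF hom assms(2,3) p] by simp
qed (simp_all add: mon_hom_on_zero[OF hom])

lemma free_monoid_rank_one:
  fixes A :: "(real^'n) set"
  assumes "free_monoid_rank A 1"
  obtains f where "f \<noteq> 0" and "A = {real n *\<^sub>R f | n. True}"
proof -
  obtain f :: "nat \<Rightarrow> real^'n" where
    A: "A = {(\<Sum>k<1. real (c k) *\<^sub>R f k) | c. True}" and
    unique: "\<forall>c c'. (\<Sum>k<1. real (c k) *\<^sub>R f k) = (\<Sum>k<1. real (c' k) *\<^sub>R f k) \<longrightarrow> (\<forall>k<1. c k = c' k)"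
    using assms unfolding free_monoid_rank_def by blast
  have "f 0 \<noteq> 0"
    using unique[rule_format, of "\<lambda>_. 0" "\<lambda>_. 1" 0] by auto
  moreover have "A = {real n *\<^sub>R f 0 | n. True}"
    unfolding A by (auto intro: exI[of _ "\<lambda>_. n" for n])
  ultimately show thesis
    by (rule that)
qed

lemma free_monoid_add_mem:
  fixes A :: "(real^'n) set"
  assumes "free_monoid_rank A k" "x \<in> A" "y \<in> A"
  shows "x + y \<in> A"
proof -
  obtain f :: "nat \<Rightarrow> real^'n" where A: "A = {(\<Sum>i<k. real (c i) *\<^sub>R f i) | c. True}"
    using assms(1) unfolding free_monoid_rank_def by blast
  obtain c c' where "x = (\<Sum>i<k. real (c i) *\<^sub>R f i)" "y = (\<Sum>i<k. real (c' i) *\<^sub>R f i)"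
    using assms(2,3) unfolding A by blast
  then have "x + y = (\<Sum>i<k. real (c i + c' i) *\<^sub>R f i)"
    by (simp add: sum.distrib scaleR_add_left)
  then show ?thesis
    unfolding A by (intro CollectI exI[of _ "\<lambda>i. c i + c' i"]) simp
qed

lemma free_monoid_zero_mem: "free_monoid_rank A k \<Longrightarrow> 0 \<in> A"
  unfolding free_monoid_rank_def by (auto intro: exI[of _ "\<lambda>_. 0"])

lemma free_monoid_irreducible:
  fixes f :: "nat \<Rightarrow> 'a::real_vector"
  assumes A: "A = {(\<Sum>i<k. real (c i) *\<^sub>R f i) | c. True}"
    and unique: "\<And>c c'. (\<Sum>i<k. real (c i) *\<^sub>R f i) = (\<Sum>i<k. real (c' i) *\<^sub>R f i) \<Longrightarrow> \<forall>i<k. c i = c' i"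
    and x: "x \<in> A" "x \<noteq> 0"
    and irreducible: "\<And>a b. a \<in> A \<Longrightarrow> b \<in> A \<Longrightarrow> x = a + b \<Longrightarrow> a = 0 \<or> b = 0"
  shows "\<exists>l<k. x = f l"
proof -
  obtain c where c: "x = (\<Sum>i<k. real (c i) *\<^sub>R f i)"
    using x(1) unfolding A by blast
  have "\<exists>l<k. c l > 0"
  proof (rule ccontr)
    assume "\<not> (\<exists>l<k. c l > 0)"
    then have "x = 0"
      unfolding c by (intro sum.neutral) auto
    with x(2) show False ..
  qed
  then obtain l where l: "l < k" "c l > 0"
    by blast
  define e where "e = (\<lambda>i. if i = l then 1 else 0 :: nat)"
  define c' where "c' = c(l := c l - 1)"
  have "(\<Sum>i<k. real (e i) *\<^sub>R f i) = (\<Sum>i<k. if i = l then f i else 0)"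
    by (intro sum.cong) (auto simp: e_def)
  then have f_l: "(\<Sum>i<k. real (e i) *\<^sub>R f i) = f l"
    using l(1) by simp
  have split: "x = f l + (\<Sum>i<k. real (c' i) *\<^sub>R f i)"
    unfolding c f_l[symmetric] sum.distrib[symmetric]
    using l by (intro sum.cong) (auto simp: e_def c'_def simp flip: scaleR_add_left)
  have "f l \<noteq> 0"
  proof
    assume "f l = 0"
    then have "(\<Sum>i<k. real (e i) *\<^sub>R f i) = (\<Sum>i<k. real ((\<lambda>_. 0::nat) i) *\<^sub>R f i)"
      using f_l by simp
    from unique[OF this] l(1) show False
      by (auto simp: e_def)
  qed
  moreover have "f l \<in> A" "(\<Sum>i<k. real (c' i) *\<^sub>R f i) \<in> A"
    unfolding A f_l[symmetric] by blast+
  ultimately have "(\<Sum>i<k. real (c' i) *\<^sub>R f i) = 0"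
    using irreducible split by blast
  then show ?thesis
    using split l(1) by auto
qed

lemma free_monoid_generated_by_irreducibles:
  fixes g :: "'i::finite \<Rightarrow> real^'n"
  assumes free: "free_monoid_rank A CARD('i)" and "inj g"
    and g: "\<And>i. g i \<in> A" "\<And>i. g i \<noteq> 0"
    and irreducible: "\<And>i a b. a \<in> A \<Longrightarrow> b \<in> A \<Longrightarrow> g i = a + b \<Longrightarrow> a = 0 \<or> b = 0"
  shows "A = {(\<Sum>i\<in>UNIV. real (c i) *\<^sub>R g i) | c. True}"
proof
  show "{(\<Sum>i\<in>UNIV. real (c i) *\<^sub>R g i) | c. True} \<subseteq> A"
    using nat_combination_mem[OF free_monoid_zero_mem[OF free] free_monoid_add_mem[OF free], of UNIV g] g(1)
    by blast
  let ?d = "CARD('i)"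
  obtain f :: "nat \<Rightarrow> real^'n" where A: "A = {(\<Sum>k<?d. real (c k) *\<^sub>R f k) | c. True}"
    and unique: "\<And>c c'. (\<Sum>k<?d. real (c k) *\<^sub>R f k) = (\<Sum>k<?d. real (c' k) *\<^sub>R f k) \<Longrightarrow> \<forall>k<?d. c k = c' k"
    using free unfolding free_monoid_rank_def by blast
  have "\<forall>i. \<exists>l<?d. g i = f l"
  proof
    fix i
    show "\<exists>l<?d. g i = f l"
      using free_monoid_irreducible[where A = A and k = ?d and f = f and x = "g i"] A unique g irreducible by blast
  qed
  then obtain p where p: "\<And>i. p i < ?d" "\<And>i. g i = f (p i)"
    by metis
  have "inj p"
    using \<open>inj g\<close> p(2) by (metis injD injI)
  then have bij: "bij_betw p UNIV {..<?d}"
    using p(1) by (simp add: bij_betw_def card_image card_subset_eq image_subsetI)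
  show "A \<subseteq> {(\<Sum>i\<in>UNIV. real (c i) *\<^sub>R g i) | c. True}"
  proof
    fix x assume "x \<in> A"
    then obtain c where "x = (\<Sum>k<?d. real (c k) *\<^sub>R f k)"
      unfolding A by blast
    also have "\<dots> = (\<Sum>i\<in>UNIV. real (c (p i)) *\<^sub>R g i)"
      unfolding p(2) by (rule sum.reindex_bij_betw[OF bij, symmetric])
    finally show "x \<in> {(\<Sum>i\<in>UNIV. real (c i) *\<^sub>R g i) | c. True}"
      by (intro CollectI exI[of _ "c \<circ> p"]) simp
  qed
qed

lemma nat_hom_mult:
  assumes "nat_hom \<phi>"
  shows "\<phi> (\<lambda>j. k * x j) = (\<lambda>j. k * \<phi> x j)"
proof (induction k)
  case 0
  then show ?case
    using assms by (simp add: nat_hom_def)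
next
  case (Suc k)
  have "\<phi> (\<lambda>j. x j + k * x j) = (\<lambda>j. \<phi> x j + \<phi> (\<lambda>j. k * x j) j)"
    using assms[unfolded nat_hom_def] by (elim conjE allE[of _ x] allE[of _ "\<lambda>j. k * x j"]) simp
  then show ?case
    using Suc by simp
qed

section \<open>Integer matrices\<close>

lemma invertible_if_rows_independent:
  fixes g :: "'n::finite \<Rightarrow> real^'n"
  assumes independent: "\<And>c. (\<Sum>i\<in>UNIV. c i *\<^sub>R g i) = 0 \<Longrightarrow> c = (\<lambda>_. 0)"
  shows "invertible (\<chi> i. g i)"
proof -
  let ?G = "transpose (\<chi> i. g i)"
  have G: "?G *v c = (\<Sum>i\<in>UNIV. c $ i *\<^sub>R g i)" for c
    by (simp add: matrix_mult_sum scalar_mult_eq_scaleR row_def)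
  have "inj ((*v) ?G)"
  proof (rule injI)
    fix x y assume "?G *v x = ?G *v y"
    then have "?G *v (x - y) = 0"
      by (simp add: matrix_vector_mult_diff_distrib)
    then have "(\<Sum>i\<in>UNIV. (x - y) $ i *\<^sub>R g i) = 0"
      by (simp only: G)
    then show "x = y"
      using independent[of "\<lambda>i. (x - y) $ i"] by (simp add: fun_eq_iff vec_eq_iff)
  qed
  then have "invertible ?G"
    by (simp add: invertible_left_inverse matrix_left_invertible_injective)
  then show ?thesis
    by (simp add: invertible_det_nz)
qed

lemma matrix_inv_inverse:
  assumes "invertible A"
  shows "A ** matrix_inv A = mat 1" and "matrix_inv A ** A = mat 1"
  using assms someI_ex[of "\<lambda>A'. A ** A' = mat 1 \<and> A' ** A = mat 1"]
  unfolding invertible_def matrix_inv_def by auto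

lemma inner_column_matrix_inv:
  fixes A :: "real^'n^'n"
  assumes "invertible A"
  shows "A $ i \<bullet> column j (matrix_inv A) = of_bool (i = j)"
proof -
  have "A $ i \<bullet> column j (matrix_inv A) = (A ** matrix_inv A) $ i $ j"
    by (simp add: matrix_matrix_mult_def inner_vec_def column_def)
  then show ?thesis
    by (simp add: matrix_inv_inverse(1)[OF assms] mat_def)
qed

lemma expansion_columns_matrix_inv:
  fixes A :: "real^'n^'n"
  assumes "invertible A"
  shows "x = (\<Sum>i\<in>UNIV. (A $ i \<bullet> x) *\<^sub>R column i (matrix_inv A))"
proof -
  have "x = matrix_inv A *v (A *v x)"
    by (simp add: matrix_vector_mul_assoc matrix_inv_inverse(2)[OF assms])
  also have "\<dots> = (\<Sum>i\<in>UNIV. (A $ i \<bullet> x) *\<^sub>R column i (matrix_inv A))"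
    by (subst matrix_mult_sum) (simp add: matrix_vector_mul_component scalar_mult_eq_scaleR)
  finally show ?thesis .
qed

lemma det_in_Ints: "(\<And>i j. A $ i $ j \<in> \<int>) \<Longrightarrow> det A \<in> \<int>"
  unfolding det_def by (intro Ints_sum Ints_mult Ints_prod) auto

lemma det_scaleR_in_lat:
  assumes A: "\<And>i j. A $ i $ j \<in> \<int>" and "A *v x \<in> lat"
  shows "det A *\<^sub>R x \<in> lat"
proof -
  have "x $ k * det A \<in> \<int>" for k
    unfolding cramer_lemma[symmetric] using A \<open>A *v x \<in> lat\<close>
    by (intro det_in_Ints) (simp add: lat_def)
  then show ?thesis
    by (simp add: lat_def mult.commute)
qed

section \<open>The simplicial stacky cone\<close>

locale simplicial_stacky_cone =
  fixes u :: "'n::finite \<Rightarrow> real^'n" and S0 :: "(real^'n) set"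
  assumes inj_u: "inj u" and independent_u: "independent (range u)"
    and stacky: "stacky_simplex u S0"
begin

lemma u_coordinates_zero:
  assumes "(\<Sum>i\<in>UNIV. c i *\<^sub>R u i) = 0"
  shows "c = (\<lambda>_. 0)"
proof -
  have "(\<Sum>v\<in>range u. c (inv u v) *\<^sub>R v) = 0"
    using assms inj_u by (simp add: sum.reindex)
  then have "\<forall>v\<in>range u. c (inv u v) = 0"
    using independent_u real_vector.dependent_finite[of "range u"] by auto
  then show ?thesis
    using inj_u by auto
qed

lemma u_coordinates_unique:
  assumes "(\<Sum>i\<in>UNIV. c i *\<^sub>R u i) = (\<Sum>i\<in>UNIV. d i *\<^sub>R u i)"
  shows "c = d"
proof -
  have "(\<Sum>i\<in>UNIV. (c i - d i) *\<^sub>R u i) = 0"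
    using assms by (simp add: scaleR_diff_left sum_subtractf)
  then have "(\<lambda>i. c i - d i) = (\<lambda>_. 0)"
    by (rule u_coordinates_zero)
  then show ?thesis
    by (simp add: fun_eq_iff)
qed

lemma S0_subset_cone: "S0 \<subseteq> cone_gen u UNIV"
  and S0_subset_lat: "S0 \<subseteq> lat"
  using stacky unfolding stacky_simplex_def by auto

lemma cone_summand_in_ray:
  assumes "a \<in> cone_gen u UNIV" "b \<in> cone_gen u UNIV" "a + b \<in> ray u i"
  shows "a \<in> ray u i"
proof -
  obtain \<alpha> \<beta> where a: "a = (\<Sum>j\<in>UNIV. \<alpha> j *\<^sub>R u j)" "\<forall>j. \<alpha> j \<ge> 0"
    and b: "b = (\<Sum>j\<in>UNIV. \<beta> j *\<^sub>R u j)" "\<forall>j. \<beta> j \<ge> 0"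
    using assms(1,2) unfolding cone_gen_def by auto
  obtain t where "a + b = t *\<^sub>R u i"
    using assms(3) unfolding ray_eq by blast
  also have "\<dots> = (\<Sum>j\<in>UNIV. (if j = i then t else 0) *\<^sub>R u j)"
    by (rule sum_delta_scaleR[symmetric])
  finally have coeff: "(\<lambda>j. \<alpha> j + \<beta> j) = (\<lambda>j. if j = i then t else 0)"
    by (intro u_coordinates_unique) (simp add: a b scaleR_add_left sum.distrib)
  have "\<alpha> j = 0" if "j \<noteq> i" for j
  proof -
    have "\<alpha> j + \<beta> j = 0"
      using fun_cong[OF coeff, of j] that by simp
    with a(2) b(2) show ?thesis
      by (meson add_nonneg_eq_0_iff)
  qed
  then have "a = \<alpha> i *\<^sub>R u i"
    unfolding a by (subst sum.remove[of _ i]) auto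
  then show ?thesis
    unfolding ray_eq using a(2) by blast
qed

lemma ray_inter_S0_free:
  obtains g where "g \<noteq> 0" and "ray u i \<inter> S0 = {real n *\<^sub>R g | n. True}"
proof -
  have "free_monoid_rank (cone_gen u {i} \<inter> S0) (card {i})"
    using stacky unfolding stacky_simplex_def by blast
  then have "free_monoid_rank (ray u i \<inter> S0) 1"
    by (simp add: ray_def)
  then show thesis
    using that free_monoid_rank_one by blast
qed

lemma lat_ray_prim_ray: "lat \<inter> ray u i = {real n *\<^sub>R prim_ray u i | n. True}"
  and prim_ray_dual: "\<exists>m\<in>lat. m \<bullet> prim_ray u i = 1"
proof -
  obtain g where g: "g \<noteq> 0" "ray u i \<inter> S0 = {real n *\<^sub>R g | n. True}"
    by (rule ray_inter_S0_free)
  then have "g \<in> ray u i \<inter> S0"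
    using self_in_nat_multiples by blast
  then obtain t where t: "t \<ge> 0" "g = t *\<^sub>R u i" "g \<in> lat"
    using S0_subset_lat unfolding ray_eq by blast
  with g(1) have "t > 0"
    by auto
  then have "ray u i = {s *\<^sub>R g | s. s \<ge> 0}"
    unfolding ray_eq t(2) by (rule halfline_scaleR_pos[symmetric])
  moreover obtain z where z: "lat \<inter> {s *\<^sub>R g | s. s \<ge> 0} = {real n *\<^sub>R z | n. True}"
    "\<exists>m\<in>lat. m \<bullet> z = 1"
    using lat_halfline_generator[OF t(3) g(1)] by blast
  moreover have "z \<noteq> 0"
    using z(2) by auto
  ultimately have "prim_ray u i = z"
    by (intro prim_ray_eqI) simp_all
  with z \<open>ray u i = _\<close> show "lat \<inter> ray u i = {real n *\<^sub>R prim_ray u i | n. True}"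
    and "\<exists>m\<in>lat. m \<bullet> prim_ray u i = 1"
    by auto
qed

lemma prim_ray_nonzero: "prim_ray u i \<noteq> 0"
  using prim_ray_dual[of i] by auto

lemma prim_ray_in_lat_ray: "prim_ray u i \<in> lat \<inter> ray u i"
  unfolding lat_ray_prim_ray by (rule self_in_nat_multiples)

definition stacky_gen :: "'n \<Rightarrow> real^'n" where
  "stacky_gen i = real (level u S0 i) *\<^sub>R prim_ray u i"

lemma level_pos: "level u S0 i > 0"
  and ray_inter_S0: "ray u i \<inter> S0 = {real n *\<^sub>R stacky_gen i | n. True}"
proof -
  obtain g where g: "g \<noteq> 0" "ray u i \<inter> S0 = {real n *\<^sub>R g | n. True}"
    by (rule ray_inter_S0_free)
  then have "g \<in> ray u i \<inter> S0"
    using self_in_nat_multiples by blast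
  then have "g \<in> lat \<inter> ray u i" "g \<in> S0"
    using S0_subset_lat by auto
  then obtain c where c: "g = real c *\<^sub>R prim_ray u i"
    unfolding lat_ray_prim_ray by blast
  with g(1) have "c > 0"
    by (cases c) auto
  have "level u S0 i = c"
    unfolding level_def
  proof (rule Least_equality)
    show "c > 0 \<and> real c *\<^sub>R prim_ray u i \<in> S0"
      using \<open>c > 0\<close> \<open>g \<in> S0\<close> c by simp
    fix k assume k: "k > 0 \<and> real k *\<^sub>R prim_ray u i \<in> S0"
    then have "real k *\<^sub>R prim_ray u i \<in> ray u i \<inter> S0"
      using lat_ray_prim_ray by blast
    then obtain n where "real k *\<^sub>R prim_ray u i = real (n * c) *\<^sub>R prim_ray u i"
      unfolding g(2) c by auto
    then have "k = n * c"
      by (metis prim_ray_nonzero scaleR_cancel_right of_nat_eq_iff)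
    with k show "c \<le> k"
      by simp
  qed
  with \<open>c > 0\<close> g(2) c show "level u S0 i > 0"
    and "ray u i \<inter> S0 = {real n *\<^sub>R stacky_gen i | n. True}"
    by (auto simp: stacky_gen_def)
qed

lemma stacky_gen_in_ray_S0: "stacky_gen i \<in> ray u i \<inter> S0"
  unfolding ray_inter_S0 by (rule self_in_nat_multiples)

lemma stacky_gen_in_S0: "stacky_gen i \<in> S0"
  using stacky_gen_in_ray_S0 by blast

lemma stacky_gen_in_lat: "stacky_gen i \<in> lat"
  using stacky_gen_in_S0 S0_subset_lat by blast

lemma stacky_gen_nonzero: "stacky_gen i \<noteq> 0"
  using level_pos prim_ray_nonzero by (simp add: stacky_gen_def)

lemma inner_stacky_gen: "m \<bullet> stacky_gen i = real (level u S0 i) * (m \<bullet> prim_ray u i)"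
  by (simp add: stacky_gen_def)

lemma stacky_gen_pos_multiple: "\<exists>t>0. stacky_gen i = t *\<^sub>R u i"
proof -
  obtain t where "t \<ge> 0" "stacky_gen i = t *\<^sub>R u i"
    using stacky_gen_in_ray_S0 unfolding ray_eq by blast
  with stacky_gen_nonzero[of i] show ?thesis
    by (cases "t = 0") auto
qed

lemma stacky_gen_coordinates_zero:
  assumes "(\<Sum>i\<in>UNIV. c i *\<^sub>R stacky_gen i) = 0"
  shows "c = (\<lambda>_. 0)"
proof -
  obtain t where t: "\<And>i. t i > 0" "\<And>i. stacky_gen i = t i *\<^sub>R u i"
    using stacky_gen_pos_multiple by metis
  have "(\<Sum>i\<in>UNIV. (c i * t i) *\<^sub>R u i) = 0"
    using assms by (simp add: t(2))
  then have "(\<lambda>i. c i * t i) = (\<lambda>_. 0)"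
    by (rule u_coordinates_zero)
  then have "c i = 0" for i
    using t(1)[of i] by (auto simp: fun_eq_iff dest: fun_cong[of _ _ i])
  then show ?thesis
    by auto
qed

lemma inj_stacky_gen: "inj stacky_gen"
proof (rule injI)
  fix i j assume eq: "stacky_gen i = stacky_gen j"
  obtain t where t: "\<And>i. t i > 0" "\<And>i. stacky_gen i = t i *\<^sub>R u i"
    using stacky_gen_pos_multiple by metis
  have "(\<Sum>k\<in>UNIV. (if k = i then t i else 0) *\<^sub>R u k) = (\<Sum>k\<in>UNIV. (if k = j then t j else 0) *\<^sub>R u k)"
    using eq by (simp add: sum_delta_scaleR t(2))
  then have "(\<lambda>k. if k = i then t i else 0) = (\<lambda>k. if k = j then t j else 0)"
    by (rule u_coordinates_unique)
  then show "i = j"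
    using t(1)[of i] by (metis less_irrefl)
qed

lemma stacky_gen_irreducible:
  assumes "a \<in> S0" "b \<in> S0" "stacky_gen i = a + b"
  shows "a = 0 \<or> b = 0"
proof -
  have "a \<in> ray u i \<inter> S0" "b \<in> ray u i \<inter> S0"
    using assms S0_subset_cone stacky_gen_in_ray_S0[of i]
    by (auto intro: cone_summand_in_ray simp: add.commute)
  then obtain n m where "a = real n *\<^sub>R stacky_gen i" "b = real m *\<^sub>R stacky_gen i"
    unfolding ray_inter_S0 by blast
  with assms(3) have "(real n + real m - 1) *\<^sub>R stacky_gen i = 0"
    by (simp add: algebra_simps)
  then have "n + m = 1"
    using stacky_gen_nonzero[of i] by simp
  with \<open>a = _\<close> \<open>b = _\<close> show ?thesis
    by (cases n) auto
qed

lemma S0_eq: "S0 = {(\<Sum>i\<in>UNIV. real (c i) *\<^sub>R stacky_gen i) | c. True}"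
proof (rule free_monoid_generated_by_irreducibles)
  have "free_monoid_rank (cone_gen u UNIV \<inter> S0) (card (UNIV :: 'n set))"
    using stacky unfolding stacky_simplex_def by blast
  moreover have "cone_gen u UNIV \<inter> S0 = S0"
    using S0_subset_cone by blast
  ultimately show "free_monoid_rank S0 CARD('n)"
    by simp
qed (use inj_stacky_gen stacky_gen_in_S0 stacky_gen_nonzero stacky_gen_irreducible in auto)

lemma dual_monoid_iff: "m \<in> dual_monoid u \<longleftrightarrow> m \<in> lat \<and> (\<forall>i. m \<bullet> stacky_gen i \<ge> 0)"
proof
  assume "m \<in> dual_monoid u"
  then show "m \<in> lat \<and> (\<forall>i. m \<bullet> stacky_gen i \<ge> 0)"
    using stacky_gen_in_S0 S0_subset_cone unfolding dual_monoid_def by blast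
next
  assume m: "m \<in> lat \<and> (\<forall>i. m \<bullet> stacky_gen i \<ge> 0)"
  obtain t where t: "\<And>i. t i > 0" "\<And>i. stacky_gen i = t i *\<^sub>R u i"
    using stacky_gen_pos_multiple by metis
  have "m \<bullet> u i \<ge> 0" for i
  proof -
    have "0 \<le> m \<bullet> stacky_gen i"
      using m by blast
    then have "0 \<le> t i * (m \<bullet> u i)"
      using t(2)[of i] by simp
    with t(1)[of i] show ?thesis
      by (simp add: zero_le_mult_iff)
  qed
  then have "m \<bullet> v \<ge> 0" if "v \<in> cone_gen u UNIV" for v
    using that unfolding cone_gen_def by (auto simp: inner_sum_right intro!: sum_nonneg)
  with m show "m \<in> dual_monoid u"
    unfolding dual_monoid_def by blast
qed

lemma inner_stacky_gen_Nats:
  assumes "m \<in> dual_monoid u"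
  shows "m \<bullet> stacky_gen j \<in> \<nat>"
proof -
  have "m \<bullet> stacky_gen j \<in> \<int>"
    using assms stacky_gen_in_lat by (intro lat_inner) (auto simp: dual_monoid_iff)
  with assms show ?thesis
    by (simp add: Nats_altdef2 dual_monoid_iff)
qed

lemma dual_monoid_add: "m \<in> dual_monoid u \<Longrightarrow> m' \<in> dual_monoid u \<Longrightarrow> m + m' \<in> dual_monoid u"
  by (simp add: dual_monoid_iff lat_add inner_add_left)

lemma zero_in_dual_monoid: "0 \<in> dual_monoid u"
  by (simp add: dual_monoid_iff)

definition gen_matrix :: "real^'n^'n" where
  "gen_matrix = (\<chi> i. stacky_gen i)"

definition dual_gen :: "'n \<Rightarrow> real^'n" where
  "dual_gen j = column j (matrix_inv gen_matrix)"

definition denom :: nat where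
  "denom = nat \<lfloor>\<bar>det gen_matrix\<bar>\<rfloor>"

lemma invertible_gen_matrix: "invertible gen_matrix"
  unfolding gen_matrix_def by (rule invertible_if_rows_independent) (rule stacky_gen_coordinates_zero)

lemma inner_stacky_gen_dual_gen: "stacky_gen i \<bullet> dual_gen j = of_bool (i = j)"
  using inner_column_matrix_inv[OF invertible_gen_matrix] by (simp add: dual_gen_def gen_matrix_def)

lemma dual_gen_expansion: "x = (\<Sum>i\<in>UNIV. (stacky_gen i \<bullet> x) *\<^sub>R dual_gen i)"
  using expansion_columns_matrix_inv[OF invertible_gen_matrix] by (simp add: dual_gen_def gen_matrix_def)

lemma eq_if_inner_stacky_gen_eq:
  assumes "\<And>i. stacky_gen i \<bullet> a = stacky_gen i \<bullet> b"
  shows "a = b"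
proof -
  have "a = (\<Sum>i\<in>UNIV. (stacky_gen i \<bullet> a) *\<^sub>R dual_gen i)"
    by (rule dual_gen_expansion)
  also have "\<dots> = (\<Sum>i\<in>UNIV. (stacky_gen i \<bullet> b) *\<^sub>R dual_gen i)"
    by (simp only: assms)
  also have "\<dots> = b"
    by (rule dual_gen_expansion[symmetric])
  finally show ?thesis .
qed

lemma inner_dual_gen_combination: "(\<Sum>j\<in>UNIV. c j *\<^sub>R dual_gen j) \<bullet> stacky_gen i = c i"
  by (simp add: inner_sum_left inner_commute[of "dual_gen _"] inner_stacky_gen_dual_gen
      if_distrib[of "\<lambda>x. _ * x"] cong: if_cong)

lemma gen_matrix_integral: "gen_matrix $ i $ j \<in> \<int>"
  using stacky_gen_in_lat by (simp add: gen_matrix_def lat_def)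

lemma real_denom: "real denom = \<bar>det gen_matrix\<bar>"
  using det_in_Ints[OF gen_matrix_integral] by (auto simp: denom_def elim!: Ints_cases)

lemma denom_pos: "denom > 0"
  using invertible_gen_matrix real_denom by (simp add: invertible_det_nz)

lemma denom_dual_gen_in_lat: "real denom *\<^sub>R dual_gen j \<in> lat"
proof -
  have "gen_matrix *v dual_gen j \<in> lat"
    by (simp add: lat_def matrix_vector_mul_component gen_matrix_def inner_stacky_gen_dual_gen)
  then have "det gen_matrix *\<^sub>R dual_gen j \<in> lat"
    by (intro det_scaleR_in_lat gen_matrix_integral)
  then have "sgn (det gen_matrix) *\<^sub>R (det gen_matrix *\<^sub>R dual_gen j) \<in> lat"
    by (rule lat_scaleR) (simp add: sgn_if)
  then show ?thesis
    by (simp add: real_denom abs_sgn mult.commute)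
qed

lemma dual_gen_rational: "dual_gen j $ k \<in> \<rat>"
proof -
  obtain a where "real denom * dual_gen j $ k = of_int a"
    using denom_dual_gen_in_lat[of j] by (auto simp: lat_def elim!: Ints_cases)
  then have "dual_gen j $ k = of_int a / real denom"
    using denom_pos by (simp add: field_simps)
  then show ?thesis
    by simp
qed

lemma denom_dual_gen_in_dual_monoid: "real denom *\<^sub>R dual_gen j \<in> dual_monoid u"
  using denom_dual_gen_in_lat
  by (simp add: dual_monoid_iff inner_commute[of _ "stacky_gen _"] inner_stacky_gen_dual_gen)

lemma nat_combination_dual_gen_in_dual_monoid:
  "(\<Sum>j\<in>UNIV. real (c j) *\<^sub>R (real denom *\<^sub>R dual_gen j)) \<in> dual_monoid u"
  by (rule nat_combination_mem[OF zero_in_dual_monoid dual_monoid_add denom_dual_gen_in_dual_monoid])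

text \<open>Adding large multiples of the other scaled dual basis vectors to a lattice point
  m0 with m0 \<bullet> zeta = 1 moves it into the dual monoid without changing m0 \<bullet> zeta.\<close>

lemma exists_dual_monoid_pairing_one: "\<exists>m\<in>dual_monoid u. m \<bullet> prim_ray u i = 1"
proof -
  obtain m0 where m0: "m0 \<in> lat" "m0 \<bullet> prim_ray u i = 1"
    using prim_ray_dual by blast
  define K where "K j = (if j = i then 0 else nat \<lceil>\<bar>m0 \<bullet> stacky_gen j\<bar>\<rceil>)" for j
  define m where "m = m0 + (\<Sum>j\<in>UNIV. real (K j) *\<^sub>R (real denom *\<^sub>R dual_gen j))"
  have m_gen: "m \<bullet> stacky_gen j = m0 \<bullet> stacky_gen j + real (K j) * real denom" for j
    using inner_dual_gen_combination[of "\<lambda>j. real (K j) * real denom"]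
    by (simp add: m_def inner_add_left)
  have "m \<in> lat"
    unfolding m_def using lat_scaleR[OF denom_dual_gen_in_lat Ints_of_nat]
    by (intro lat_add m0(1) lat_sum) blast
  moreover have "m \<bullet> stacky_gen j \<ge> 0" for j
  proof (cases "j = i")
    case True
    then show ?thesis
      using m_gen[of i] m0(2) by (simp add: K_def inner_stacky_gen[of m0])
  next
    case False
    have "\<bar>m0 \<bullet> stacky_gen j\<bar> \<le> real (K j)"
      using False by (simp add: K_def real_nat_ceiling_ge)
    also have "\<dots> \<le> real (K j) * real denom"
      using denom_pos mult_left_mono[of 1 "real denom" "real (K j)"] by simp
    finally show ?thesis
      using m_gen[of j] by linarith
  qed
  moreover have "m \<bullet> prim_ray u i = 1"
    using m_gen[of i] m0(2) level_pos[of i] by (simp add: K_def inner_stacky_gen)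
  ultimately show ?thesis
    by (auto simp: dual_monoid_iff)
qed

lemma target_eq: "target S0 = {m. \<forall>i. m \<bullet> stacky_gen i \<in> \<nat>}"
proof (intro set_eqI iffI)
  fix m assume "m \<in> target S0"
  then have "\<forall>v\<in>S0. m \<bullet> v \<in> \<nat>"
    by (simp add: target_def)
  then show "m \<in> {m. \<forall>i. m \<bullet> stacky_gen i \<in> \<nat>}"
    using stacky_gen_in_S0 by simp
next
  fix m assume "m \<in> {m. \<forall>i. m \<bullet> stacky_gen i \<in> \<nat>}"
  then have "\<forall>i. \<exists>k. stacky_gen i \<bullet> m = real k"
    by (auto simp: inner_commute Nats_def)
  then obtain n where "\<forall>i. stacky_gen i \<bullet> m = real (n i)"
    by (rule choice[THEN exE])
  then have n: "stacky_gen i \<bullet> m = real (n i)" for i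
    by blast
  have "m = (\<Sum>i\<in>UNIV. (stacky_gen i \<bullet> m) *\<^sub>R dual_gen i)"
    by (rule dual_gen_expansion)
  also have "\<dots> = (\<Sum>i\<in>UNIV. real (n i) *\<^sub>R dual_gen i)"
    by (simp add: n)
  finally have "m $ k \<in> \<rat>" for k
    by simp (auto intro!: Rats_mult dual_gen_rational)
  moreover have "m \<bullet> v \<in> \<nat>" if "v \<in> S0" for v
  proof -
    have "v \<in> {(\<Sum>i\<in>UNIV. real (c i) *\<^sub>R stacky_gen i) | c. True}"
      using \<open>v \<in> S0\<close> S0_eq by simp
    then obtain c where "v = (\<Sum>i\<in>UNIV. real (c i) *\<^sub>R stacky_gen i)"
      by blast
    then have "m \<bullet> v = real (\<Sum>i\<in>UNIV. c i * n i)"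
      by (simp add: inner_sum_right inner_commute[of m] n)
    then show ?thesis
      by (metis of_nat_in_Nats)
  qed
  ultimately show "m \<in> target S0"
    unfolding target_def by blast
qed

definition prim_pairing :: "real^'n \<Rightarrow> ('n \<Rightarrow> nat)" where
  "prim_pairing m = (\<lambda>i. nat \<lfloor>m \<bullet> prim_ray u i\<rfloor>)"

lemma prim_pairing_eq:
  assumes "m \<in> dual_monoid u"
  shows "real (prim_pairing m i) = m \<bullet> prim_ray u i"
proof -
  have "m \<bullet> prim_ray u i \<in> \<int>"
    using assms prim_ray_in_lat_ray by (intro lat_inner) (auto simp: dual_monoid_iff)
  moreover have "m \<bullet> stacky_gen i \<ge> 0"
    using assms by (simp add: dual_monoid_iff)
  then have "m \<bullet> prim_ray u i \<ge> 0"
    using level_pos[of i] by (simp add: inner_stacky_gen zero_le_mult_iff)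
  ultimately show ?thesis
    by (auto simp: prim_pairing_def elim!: Ints_cases)
qed

lemma prim_pairing_mon_hom: "mon_hom_on (dual_monoid u) prim_pairing"
  unfolding mon_hom_on_def
proof (intro conjI ballI ext)
  fix a b i assume "a \<in> dual_monoid u" "b \<in> dual_monoid u"
  then have "real (prim_pairing (a + b) i) = real (prim_pairing a i + prim_pairing b i)"
    by (simp add: prim_pairing_eq dual_monoid_add inner_add_left)
  then show "prim_pairing (a + b) i = prim_pairing a i + prim_pairing b i"
    by (simp only: of_nat_eq_iff)
qed (simp add: prim_pairing_def)

lemma prim_pairing_inj: "inj_on prim_pairing (dual_monoid u)"
proof (rule inj_onI)
  fix m m' assume m: "m \<in> dual_monoid u" "m' \<in> dual_monoid u" "prim_pairing m = prim_pairing m'"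
  then have "m \<bullet> prim_ray u i = m' \<bullet> prim_ray u i" for i
    using prim_pairing_eq[OF m(1), of i] prim_pairing_eq[OF m(2), of i] by simp
  then show "m = m'"
    by (intro eq_if_inner_stacky_gen_eq) (simp add: inner_commute[of "stacky_gen _"] inner_stacky_gen)
qed

lemma prim_pairing_close: "close_image (dual_monoid u) prim_pairing"
  unfolding close_image_def
proof (intro allI exI conjI bexI)
  fix x :: "'n \<Rightarrow> nat"
  define m where "m = (\<Sum>j\<in>UNIV. real (level u S0 j * x j) *\<^sub>R (real denom *\<^sub>R dual_gen j))"
  show "m \<in> dual_monoid u"
    unfolding m_def by (rule nat_combination_dual_gen_in_dual_monoid)
  have m_gen: "m \<bullet> stacky_gen i = real (level u S0 i) * real (denom * x i)" for i
    using inner_dual_gen_combination[of "\<lambda>j. real (level u S0 j * x j) * real denom"]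
    by (simp add: m_def)
  have "real (prim_pairing m i) = real (denom * x i)" for i
    using m_gen[of i] level_pos[of i] prim_pairing_eq[OF \<open>m \<in> dual_monoid u\<close>]
    by (simp add: inner_stacky_gen)
  then have "prim_pairing m i = denom * x i" for i
    by (simp only: of_nat_eq_iff)
  then show "prim_pairing m = (\<lambda>i. denom * x i)"
    by (simp add: fun_eq_iff)
qed (rule denom_pos)

lemma inner_stacky_gen_reindexed_combination:
  assumes "bij \<sigma>"
  shows "(\<Sum>i\<in>UNIV. real (x i) *\<^sub>R dual_gen (\<sigma> i)) \<bullet> stacky_gen (\<sigma> j) = real (x j)"
proof -
  have "(\<Sum>i\<in>UNIV. real (x i) *\<^sub>R dual_gen (\<sigma> i)) = (\<Sum>k\<in>UNIV. real (x (inv \<sigma> k)) *\<^sub>R dual_gen k)"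
    using sum.reindex_bij_betw[OF assms, of "\<lambda>k. real (x (inv \<sigma> k)) *\<^sub>R dual_gen k"] assms
    by (simp add: inv_f_f bij_is_inj)
  then show ?thesis
    using assms by (simp add: inner_dual_gen_combination inv_f_f bij_is_inj)
qed

lemma bij_dual_gen_coordinates:
  assumes "bij \<sigma>"
  shows "bij_betw (\<lambda>x. \<Sum>i\<in>UNIV. real (x i) *\<^sub>R dual_gen (\<sigma> i)) UNIV (target S0)"
    (is "bij_betw ?\<phi> _ _")
proof -
  have pairing: "stacky_gen (\<sigma> j) \<bullet> ?\<phi> x = real (x j)" for x j
    using inner_stacky_gen_reindexed_combination[OF assms] by (simp add: inner_commute)
  have onto: "\<exists>j. k = \<sigma> j" for k
    using surjD[OF bij_is_surj[OF assms]] .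
  have "inj ?\<phi>"
  proof (rule injI)
    fix x y assume "?\<phi> x = ?\<phi> y"
    then have "real (x j) = real (y j)" for j
      by (metis pairing)
    then show "x = y"
      by (simp add: fun_eq_iff)
  qed
  moreover have "?\<phi> ` UNIV = target S0"
  proof (intro set_eqI iffI)
    fix m assume "m \<in> ?\<phi> ` UNIV"
    then obtain x where "m = ?\<phi> x"
      by blast
    then have "m \<bullet> stacky_gen k \<in> \<nat>" for k
      using onto[of k] pairing[where x = x] by (auto simp: inner_commute)
    then show "m \<in> target S0"
      unfolding target_eq by blast
  next
    fix m assume "m \<in> target S0"
    then have "\<forall>j. \<exists>n. m \<bullet> stacky_gen (\<sigma> j) = real n"
      by (auto simp: target_eq Nats_def)
    then obtain x where x: "\<forall>j. m \<bullet> stacky_gen (\<sigma> j) = real (x j)"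
      by (rule choice[THEN exE])
    have "stacky_gen k \<bullet> ?\<phi> x = stacky_gen k \<bullet> m" for k
      using onto[of k] pairing[where x = x] x by (auto simp: inner_commute)
    then have "?\<phi> x = m"
      by (rule eq_if_inner_stacky_gen_eq)
    then show "m \<in> ?\<phi> ` UNIV"
      by blast
  qed
  ultimately show ?thesis
    by (simp add: bij_betw_def)
qed

end

section \<open>The minimal free resolution of the dual monoid\<close>

locale stacky_cone_resolution = simplicial_stacky_cone u S0
  for u :: "'n::finite \<Rightarrow> real^'n" and S0 +
  fixes r :: "real^'n \<Rightarrow> ('n \<Rightarrow> nat)"
  assumes minimal: "minimal_free_resolution (dual_monoid u) r"
begin

lemma r_mon_hom: "mon_hom_on (dual_monoid u) r"
  and r_inj: "inj_on r (dual_monoid u)"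
  and r_close: "close_image (dual_monoid u) r"
  using minimal unfolding minimal_free_resolution_def by blast+

lemma r_scaled_linear:
  assumes m: "m \<in> dual_monoid u"
  shows "real denom * real (r m i)
    = (\<Sum>j\<in>UNIV. (m \<bullet> stacky_gen j) * real (r (real denom *\<^sub>R dual_gen j) i))"
proof -
  have "\<forall>j. \<exists>n. m \<bullet> stacky_gen j = real n"
    using inner_stacky_gen_Nats[OF m] unfolding Nats_def by blast
  then obtain c where c: "\<forall>j. m \<bullet> stacky_gen j = real (c j)"
    by (rule choice[THEN exE])
  have "real denom *\<^sub>R m = real denom *\<^sub>R (\<Sum>j\<in>UNIV. (stacky_gen j \<bullet> m) *\<^sub>R dual_gen j)"
    by (simp only: dual_gen_expansion[of m, symmetric])
  also have "\<dots> = (\<Sum>j\<in>UNIV. real (c j) *\<^sub>R (real denom *\<^sub>R dual_gen j))"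
    by (simp add: inner_commute[of "stacky_gen _" m] c scaleR_sum_right mult.commute)
  finally have "r (real denom *\<^sub>R m) = (\<lambda>i. \<Sum>j\<in>UNIV. c j * r (real denom *\<^sub>R dual_gen j) i)"
    using mon_hom_on_nat_combination[OF r_mon_hom zero_in_dual_monoid dual_monoid_add
        denom_dual_gen_in_dual_monoid] by simp
  moreover have "r (real denom *\<^sub>R m) = (\<lambda>i. denom * r m i)"
    by (rule mon_hom_on_nat_scaleR[OF r_mon_hom zero_in_dual_monoid dual_monoid_add m])
  ultimately have "denom * r m i = (\<Sum>j\<in>UNIV. c j * r (real denom *\<^sub>R dual_gen j) i)"
    by (simp add: fun_eq_iff)
  then have "real (denom * r m i) = real (\<Sum>j\<in>UNIV. c j * r (real denom *\<^sub>R dual_gen j) i)"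
    by (rule arg_cong)
  then show ?thesis
    using c by simp
qed

lemma r_scaled_dual_gen_nonzero: "r (real denom *\<^sub>R dual_gen j) \<noteq> (\<lambda>_. 0)"
proof
  assume "r (real denom *\<^sub>R dual_gen j) = (\<lambda>_. 0)"
  then have "real denom *\<^sub>R dual_gen j = 0"
    using inj_onD[OF r_inj] mon_hom_on_zero[OF r_mon_hom] denom_dual_gen_in_dual_monoid zero_in_dual_monoid
    by metis
  moreover have "stacky_gen j \<bullet> (real denom *\<^sub>R dual_gen j) = real denom"
    by (simp add: inner_stacky_gen_dual_gen)
  ultimately show False
    using denom_pos by simp
qed

lemma r_scaled_dual_gen_vanishes:
  assumes m: "m \<in> dual_monoid u" and "r m i = 0" and "m \<bullet> stacky_gen j > 0"
  shows "r (real denom *\<^sub>R dual_gen j) i = 0"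
proof -
  have "(\<Sum>k\<in>UNIV. (m \<bullet> stacky_gen k) * real (r (real denom *\<^sub>R dual_gen k) i)) = 0"
    using r_scaled_linear[OF m, of i] \<open>r m i = 0\<close> by simp
  moreover have "0 \<le> (m \<bullet> stacky_gen k) * real (r (real denom *\<^sub>R dual_gen k) i)" for k
    using m by (simp add: dual_monoid_iff)
  ultimately have "(m \<bullet> stacky_gen j) * real (r (real denom *\<^sub>R dual_gen j) i) = 0"
    by (simp add: sum_nonneg_eq_0_iff)
  with \<open>m \<bullet> stacky_gen j > 0\<close> show ?thesis
    by simp
qed

lemma unit_vector_preimage: "\<exists>k>0. \<exists>m\<in>dual_monoid u. r m = (\<lambda>j. k * unitv i j)"
  using r_close unfolding close_image_def by blast

text \<open>Since the image of r is close to the free monoid, every unit vector has a multiple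
  r m; the dual basis vectors paired positively with such an m can only contribute to that
  unit vector. This matches the rays with the coordinates of the free monoid.\<close>

lemma scaled_dual_gen_assignment:
  obtains \<sigma> where "bij \<sigma>" and "\<And>i j. j \<noteq> i \<Longrightarrow> r (real denom *\<^sub>R dual_gen (\<sigma> i)) j = 0"
proof -
  have "\<forall>i. \<exists>k. k > 0 \<and> (\<exists>m. m \<in> dual_monoid u \<and> r m = (\<lambda>j. k * unitv i j))"
    using unit_vector_preimage by blast
  then obtain k where k: "\<forall>i. k i > 0 \<and> (\<exists>m. m \<in> dual_monoid u \<and> r m = (\<lambda>j. k i * unitv i j))"
    by (rule choice[THEN exE])
  then have "\<forall>i. \<exists>m. m \<in> dual_monoid u \<and> r m = (\<lambda>j. k i * unitv i j)"
    by blast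
  then obtain mi where "\<forall>i. mi i \<in> dual_monoid u \<and> r (mi i) = (\<lambda>j. k i * unitv i j)"
    by (rule choice[THEN exE])
  with k have k: "\<And>i. k i > 0" and mi: "\<And>i. mi i \<in> dual_monoid u"
    and r_mi: "\<And>i. r (mi i) = (\<lambda>j. k i * unitv i j)"
    by blast+
  have "\<exists>\<rho>. mi i \<bullet> stacky_gen \<rho> > 0" for i
  proof (rule ccontr)
    assume "\<not> (\<exists>\<rho>. mi i \<bullet> stacky_gen \<rho> > 0)"
    then have "mi i \<bullet> stacky_gen \<rho> \<le> 0" for \<rho>
      by (simp add: not_less)
    moreover have "mi i \<bullet> stacky_gen \<rho> \<ge> 0" for \<rho>
      using mi[of i] by (simp add: dual_monoid_iff)
    ultimately have "stacky_gen \<rho> \<bullet> mi i = stacky_gen \<rho> \<bullet> 0" for \<rho>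
      by (simp add: inner_commute order.antisym)
    then have "mi i = 0"
      by (rule eq_if_inner_stacky_gen_eq)
    then have "r (mi i) i = 0"
      by (simp add: mon_hom_on_zero[OF r_mon_hom])
    with r_mi[of i] k[of i] show False
      by (simp add: unitv_def)
  qed
  then have "\<forall>i. \<exists>\<rho>. mi i \<bullet> stacky_gen \<rho> > 0"
    by blast
  then obtain \<sigma> where \<sigma>: "\<forall>i. mi i \<bullet> stacky_gen (\<sigma> i) > 0"
    by (rule choice[THEN exE])
  have vanish: "r (real denom *\<^sub>R dual_gen (\<sigma> i)) j = 0" if "j \<noteq> i" for i j
  proof (rule r_scaled_dual_gen_vanishes[OF mi])
    show "r (mi i) j = 0"
      using r_mi[of i] that by (simp add: unitv_def)
    show "mi i \<bullet> stacky_gen (\<sigma> i) > 0"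
      using \<sigma> by blast
  qed
  have "inj \<sigma>"
  proof (rule injI)
    fix i i' assume "\<sigma> i = \<sigma> i'"
    show "i = i'"
    proof (rule ccontr)
      assume "i \<noteq> i'"
      then have "r (real denom *\<^sub>R dual_gen (\<sigma> i)) j = 0" for j
        using vanish[of j i] vanish[of j i'] \<open>\<sigma> i = \<sigma> i'\<close> by (cases "j = i") auto
      with r_scaled_dual_gen_nonzero show False
        by blast
    qed
  qed
  then have "bij \<sigma>"
    by (simp add: bij_def finite_UNIV_inj_surj)
  with vanish show thesis
    using that by blast
qed

lemma r_monomial:
  obtains \<sigma> \<beta> where "bij \<sigma>"
    and "\<And>m i. m \<in> dual_monoid u \<Longrightarrow> real (r m i) = (m \<bullet> stacky_gen (\<sigma> i)) * \<beta> i"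
proof -
  obtain \<sigma> where "bij \<sigma>" and vanish: "\<And>i j. j \<noteq> i \<Longrightarrow> r (real denom *\<^sub>R dual_gen (\<sigma> i)) j = 0"
    using scaled_dual_gen_assignment by blast
  define \<beta> where "\<beta> i = real (r (real denom *\<^sub>R dual_gen (\<sigma> i)) i) / real denom" for i
  have "real (r m i) = (m \<bullet> stacky_gen (\<sigma> i)) * \<beta> i" if m: "m \<in> dual_monoid u" for m i
  proof -
    have "real denom * real (r m i)
        = (\<Sum>j\<in>UNIV. (m \<bullet> stacky_gen (\<sigma> j)) * real (r (real denom *\<^sub>R dual_gen (\<sigma> j)) i))"
      unfolding r_scaled_linear[OF m]
      using sum.reindex_bij_betw[OF \<open>bij \<sigma>\<close>, of "\<lambda>j. (m \<bullet> stacky_gen j) * real (r (real denom *\<^sub>R dual_gen j) i)"]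
      by simp
    also have "\<dots> = (m \<bullet> stacky_gen (\<sigma> i)) * real (r (real denom *\<^sub>R dual_gen (\<sigma> i)) i)"
      using vanish[of i] by (subst sum.remove[of _ i]) (auto intro: sum.neutral)
    finally show ?thesis
      using denom_pos by (simp add: \<beta>_def field_simps)
  qed
  with \<open>bij \<sigma>\<close> show thesis
    using that by blast
qed

text \<open>The universal property of r, applied to prim_pairing, gives
  phi(e_i)(sigma i) * delta i = 1 with both factors natural numbers.\<close>

lemma r_eq_prim_pairing:
  obtains \<sigma> where "bij \<sigma>"
    and "\<And>m i. m \<in> dual_monoid u \<Longrightarrow> real (r m i) = m \<bullet> prim_ray u (\<sigma> i)"
proof -
  obtain \<sigma> \<beta> where "bij \<sigma>"
    and r_eq: "\<And>m i. m \<in> dual_monoid u \<Longrightarrow> real (r m i) = (m \<bullet> stacky_gen (\<sigma> i)) * \<beta> i"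
    using r_monomial by blast
  define \<delta> where "\<delta> i = real (level u S0 (\<sigma> i)) * \<beta> i" for i
  have r_\<delta>: "real (r m i) = (m \<bullet> prim_ray u (\<sigma> i)) * \<delta> i" if "m \<in> dual_monoid u" for m i
    using r_eq[OF that] by (simp add: \<delta>_def inner_stacky_gen)
  have "\<exists>!\<phi>. nat_hom \<phi> \<and> (\<forall>m\<in>dual_monoid u. prim_pairing m = \<phi> (r m))"
    using minimal prim_pairing_mon_hom prim_pairing_inj prim_pairing_close
    unfolding minimal_free_resolution_def by blast
  then obtain \<phi> where "nat_hom \<phi>" and \<phi>: "\<And>m. m \<in> dual_monoid u \<Longrightarrow> prim_pairing m = \<phi> (r m)"
    by (auto dest: ex1_implies_ex)
  have \<delta>_1: "\<delta> i = 1" for i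
  proof -
    obtain k m where "k > 0" and m: "m \<in> dual_monoid u" and r_m: "r m = (\<lambda>j. k * unitv i j)"
      using unit_vector_preimage by blast
    have "prim_pairing m = (\<lambda>j. k * \<phi> (unitv i) j)"
      using \<phi>[OF m] r_m nat_hom_mult[OF \<open>nat_hom \<phi>\<close>] by simp
    then have "real k = real k * real (\<phi> (unitv i) (\<sigma> i)) * \<delta> i"
      using r_\<delta>[OF m, of i] prim_pairing_eq[OF m, of "\<sigma> i"] r_m by (simp add: unitv_def)
    then have phi_\<delta>: "real (\<phi> (unitv i) (\<sigma> i)) * \<delta> i = 1"
      using \<open>k > 0\<close> by (simp add: mult.assoc)
    obtain m1 where "m1 \<in> dual_monoid u" "m1 \<bullet> prim_ray u (\<sigma> i) = 1"
      using exists_dual_monoid_pairing_one by blast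
    then have \<delta>_r: "\<delta> i = real (r m1 i)"
      using r_\<delta> by simp
    with phi_\<delta> have "\<phi> (unitv i) (\<sigma> i) * r m1 i = 1"
      by (metis of_nat_1 of_nat_eq_iff of_nat_mult)
    with \<delta>_r show ?thesis
      by simp
  qed
  show thesis
  proof (rule that[OF \<open>bij \<sigma>\<close>])
    fix m i assume "m \<in> dual_monoid u"
    then show "real (r m i) = m \<bullet> prim_ray u (\<sigma> i)"
      using r_\<delta> \<delta>_1 by simp
  qed
qed

lemma assoc_ray_eq:
  assumes "bij \<sigma>" and r_eq: "\<And>m i. m \<in> dual_monoid u \<Longrightarrow> real (r m i) = m \<bullet> prim_ray u (\<sigma> i)"
  shows "assoc_ray u r i = \<sigma> i"
  unfolding assoc_ray_def
proof (rule the_equality)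
  show "\<forall>m\<in>dual_monoid u. \<forall>k. 0 < k \<longrightarrow> r m = (\<lambda>j. k * unitv i j) \<longrightarrow> 0 < m \<bullet> prim_ray u (\<sigma> i)"
  proof (intro ballI allI impI)
    fix m k assume "m \<in> dual_monoid u" "(0::nat) < k" "r m = (\<lambda>j. k * unitv i j)"
    then show "0 < m \<bullet> prim_ray u (\<sigma> i)"
      using r_eq[of m i] by (simp add: unitv_def)
  qed
next
  fix \<rho>
  assume "\<forall>m\<in>dual_monoid u. \<forall>k. 0 < k \<longrightarrow> r m = (\<lambda>j. k * unitv i j) \<longrightarrow> 0 < m \<bullet> prim_ray u \<rho>"
  moreover obtain k m where "k > 0" "m \<in> dual_monoid u" "r m = (\<lambda>j. k * unitv i j)"
    using unit_vector_preimage by blast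
  ultimately have "m \<bullet> prim_ray u \<rho> > 0"
    by blast
  moreover have "m \<bullet> prim_ray u (\<sigma> j) = 0" if "j \<noteq> i" for j
    using r_eq[OF \<open>m \<in> dual_monoid u\<close>, of j] \<open>r m = _\<close> that by (simp add: unitv_def)
  moreover obtain j where "\<rho> = \<sigma> j"
    using surjD[OF bij_is_surj[OF \<open>bij \<sigma>\<close>]] by blast
  ultimately show "\<rho> = \<sigma> i"
    by (cases "j = i") auto
qed

theorem stacky_resolution_inverse:
  "\<exists>\<phi> :: ('n \<Rightarrow> nat) \<Rightarrow> real^'n.
     \<phi> (\<lambda>_. 0) = 0 \<and> (\<forall>x y. \<phi> (\<lambda>i. x i + y i) = \<phi> x + \<phi> y) \<and>
     bij_betw \<phi> UNIV (target S0) \<and>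
     (\<forall>m \<in> dual_monoid u. \<phi> (stacky_resolution u S0 r m) = m)"
proof -
  obtain \<sigma> where "bij \<sigma>"
    and r_eq: "\<And>m i. m \<in> dual_monoid u \<Longrightarrow> real (r m i) = m \<bullet> prim_ray u (\<sigma> i)"
    using r_eq_prim_pairing by blast
  define \<phi> :: "('n \<Rightarrow> nat) \<Rightarrow> real^'n" where
    "\<phi> = (\<lambda>x. \<Sum>i\<in>UNIV. real (x i) *\<^sub>R dual_gen (\<sigma> i))"
  have "\<phi> (stacky_resolution u S0 r m) = m" if m: "m \<in> dual_monoid u" for m
  proof (rule eq_if_inner_stacky_gen_eq)
    fix \<rho>
    obtain j where j: "\<rho> = \<sigma> j"
      using surjD[OF bij_is_surj[OF \<open>bij \<sigma>\<close>]] by blast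
    have "stacky_gen \<rho> \<bullet> \<phi> (stacky_resolution u S0 r m) = real (stacky_resolution u S0 r m j)"
      using inner_stacky_gen_reindexed_combination[OF \<open>bij \<sigma>\<close>, of "stacky_resolution u S0 r m" j]
      by (simp add: j \<phi>_def inner_commute)
    also have "\<dots> = real (level u S0 (\<sigma> j) * r m j)"
      by (simp add: stacky_resolution_def assoc_ray_eq[OF \<open>bij \<sigma>\<close> r_eq])
    also have "\<dots> = stacky_gen \<rho> \<bullet> m"
      using r_eq[OF m, of j] by (simp add: j inner_commute inner_stacky_gen)
    finally show "stacky_gen \<rho> \<bullet> \<phi> (stacky_resolution u S0 r m) = stacky_gen \<rho> \<bullet> m" .
  qed
  moreover have "\<phi> (\<lambda>i. x i + y i) = \<phi> x + \<phi> y" for x y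
    by (simp add: \<phi>_def scaleR_add_left sum.distrib)
  moreover have "bij_betw \<phi> UNIV (target S0)"
    unfolding \<phi>_def by (rule bij_dual_gen_coordinates[OF \<open>bij \<sigma>\<close>])
  ultimately show ?thesis
    by (intro exI[of _ \<phi>]) (simp add: \<phi>_def)
qed

end

theorem lemma3p3:
  fixes u :: "'n::finite \<Rightarrow> real^'n" and S0 :: "(real^'n) set"
    and r :: "real^'n \<Rightarrow> ('n \<Rightarrow> nat)"
  assumes "inj u" and "independent (range u)"
    and "stacky_simplex u S0"
    and "minimal_free_resolution (dual_monoid u) r"
  shows "\<exists>\<phi> :: ('n \<Rightarrow> nat) \<Rightarrow> real^'n.
           \<phi> (\<lambda>_. 0) = 0 \<and> (\<forall>x y. \<phi> (\<lambda>i. x i + y i) = \<phi> x + \<phi> y) \<and>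
           bij_betw \<phi> UNIV (target S0) \<and>
           (\<forall>m \<in> dual_monoid u. \<phi> (stacky_resolution u S0 r m) = m)"
proof -
  interpret stacky_cone_resolution u S0 r
    by unfold_locales (fact assms)+
  show ?thesis
    by (rule stacky_resolution_inverse)
qed

end
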